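(* Let $\mathcal{C}'\subset\mathbb{P}^2$ be a reduced curve and $L\subset\mathbb{P}^2$ a line with equation $\alpha_L=0$ that is not contained in $\mathcal{C}'$; let $\mathcal{C}=\mathcal{C}'\cup L$ and $\mathcal{C}''=\mathcal{C}'\cap L$. Then there is an exact sequence of $S$-modules $$0\to D(\mathcal{C}')\xrightarrow{\ \cdot\alpha_L\ } D(\mathcal{C})\xrightarrow{\ \rho\ } D(\mathcal{C}''),$$ where the first map is multiplication by $\alpha_L$ and $\rho$ is defined by reducing modulo $\alpha_L$, i.e. $\rho(\theta)$ is the derivation of $\overline{S}=S/(\alpha_L)$ induced by $\theta$.
   Context: $S=\mathbb{C}[x,y,z]$. For a reduced curve $\mathcal{C}$ defined by a reduced homogeneous $f_{\mathcal{C}}\in S$, $D(\mathcal{C})=\{\theta\in\mathrm{Der}(S):\theta(f_{\mathcal{C}})\in Sf_{\mathcal{C}}\}$. Any $\theta\in D(\mathcal{C})$ satisfies $\theta(\alpha_L)\in(\alpha_L)$, hence induces a derivation of $\overline{S}=S/(\alpha_L)$ (a polynomial ring in two variables, the homogeneous coordinate ring of $L\cong\mathbb{P}^1$). The finite set of points $\mathcal{C}''\subset L$ is defined in $\overline{S}$ by the reduced polynomial $\bar g$, the product of linear forms of $\overline{S}$ vanishing at the distinct points of $\mathcal{C}''$, and $D(\mathcal{C}'')=\{\eta\in\mathrm{Der}(\overline{S}):\eta(\bar g)\in\bar g\,\overline{S}\}$. *)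

theory Defs
  imports "HOL-Computational_Algebra.Polynomial" "HOL-Computational_Algebra.Squarefree"
begin

text \<open>S = C[x,y,z] realised as nested univariate polynomials: the outermost
  variable is z, then y, then x (innermost).\<close>
type_synonym S = "complex poly poly poly"

definition const3 :: "complex \<Rightarrow> S" where
  "const3 c = [:[:[:c:]:]:]"

definition varX :: S where "varX = [:[:[:0, 1:]:]:]"
definition varY :: S where "varY = [:[:0, 1:]:]"
definition varZ :: S where "varZ = [:0, 1:]"

definition coeff3 :: "S \<Rightarrow> nat \<Rightarrow> nat \<Rightarrow> nat \<Rightarrow> complex" where
  "coeff3 f i j k = coeff (coeff (coeff f k) j) i"

definition homogeneous3 :: "nat \<Rightarrow> S \<Rightarrow> bool" where
  "homogeneous3 d f \<longleftrightarrow> (\<forall>i j k. coeff3 f i j k \<noteq> 0 \<longrightarrow> i + j + k = d)"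

definition eval3 :: "S \<Rightarrow> complex \<times> complex \<times> complex \<Rightarrow> complex" where
  "eval3 f p = (case p of (x, y, z) \<Rightarrow> poly (poly (poly f [:[:z:]:]) [:y:]) x)"

definition dX :: "S \<Rightarrow> S" where "dX f = map_poly (map_poly pderiv) f"
definition dY :: "S \<Rightarrow> S" where "dY f = map_poly pderiv f"
definition dZ :: "S \<Rightarrow> S" where "dZ f = pderiv f"

text \<open>Der(S) is the free S-module on d/dx, d/dy, d/dz; a derivation is the triple
  of its values on x, y, z.\<close>
type_synonym der = "S \<times> S \<times> S"

definition der_apply :: "der \<Rightarrow> S \<Rightarrow> S" where
  "der_apply \<theta> f = (case \<theta> of (a, b, c) \<Rightarrow> a * dX f + b * dY f + c * dZ f)"

definition der_smult :: "S \<Rightarrow> der \<Rightarrow> der" where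
  "der_smult s \<theta> = (case \<theta> of (a, b, c) \<Rightarrow> (s * a, s * b, s * c))"

definition der_add :: "der \<Rightarrow> der \<Rightarrow> der" where
  "der_add \<theta> \<theta>' = (case \<theta> of (a, b, c) \<Rightarrow> case \<theta>' of (a', b', c') \<Rightarrow> (a + a', b + b', c + c'))"

definition reduced_curve_eq :: "S \<Rightarrow> bool" where
  "reduced_curve_eq f \<longleftrightarrow> (\<exists>d. d \<ge> 1 \<and> homogeneous3 d f) \<and> f \<noteq> 0 \<and> squarefree f"

definition DC :: "S \<Rightarrow> der set" where
  "DC f = {\<theta>. f dvd der_apply \<theta> f}"

definition linear_form :: "complex \<times> complex \<times> complex \<Rightarrow> S" where
  "linear_form v = (case v of (a, b, c) \<Rightarrow> const3 a * varX + const3 b * varY + const3 c * varZ)"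

definition quot :: "S \<Rightarrow> S \<Rightarrow> S set" where
  "quot \<alpha> h = {h + \<alpha> * k |k. True}"

definition Sbar :: "S \<Rightarrow> S set set" where
  "Sbar \<alpha> = range (quot \<alpha>)"

definition qplus :: "S set \<Rightarrow> S set \<Rightarrow> S set" where
  "qplus u v = {a + b |a b. a \<in> u \<and> b \<in> v}"

definition qtimes :: "S \<Rightarrow> S set \<Rightarrow> S set \<Rightarrow> S set" where
  "qtimes \<alpha> u v = {a * b + \<alpha> * k |a b k. a \<in> u \<and> b \<in> v}"

definition DerSbar :: "S \<Rightarrow> (S set \<Rightarrow> S set) set" where
  "DerSbar \<alpha> = {\<eta>. (\<forall>u\<in>Sbar \<alpha>. \<eta> u \<in> Sbar \<alpha>)
      \<and> (\<forall>u\<in>Sbar \<alpha>. \<forall>v\<in>Sbar \<alpha>. \<eta> (qplus u v) = qplus (\<eta> u) (\<eta> v))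
      \<and> (\<forall>u\<in>Sbar \<alpha>. \<forall>v\<in>Sbar \<alpha>.
            \<eta> (qtimes \<alpha> u v) = qplus (qtimes \<alpha> u (\<eta> v)) (qtimes \<alpha> (\<eta> u) v))
      \<and> (\<forall>c. \<eta> (quot \<alpha> (const3 c)) = quot \<alpha> 0)}"

definition DCpp :: "S \<Rightarrow> S \<Rightarrow> (S set \<Rightarrow> S set) set" where
  "DCpp \<alpha> g = {\<eta> \<in> DerSbar \<alpha>. \<exists>h. \<eta> (quot \<alpha> g) = quot \<alpha> (g * h)}"

definition rho :: "S \<Rightarrow> der \<Rightarrow> S set \<Rightarrow> S set" where
  "rho \<alpha> \<theta> u = quot \<alpha> (der_apply \<theta> (SOME h. u = quot \<alpha> h))"

definition nonzero3 :: "complex \<times> complex \<times> complex \<Rightarrow> bool" where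
  "nonzero3 p \<longleftrightarrow> p \<noteq> (0, 0, 0)"

definition proportional :: "complex \<times> complex \<times> complex \<Rightarrow> complex \<times> complex \<times> complex \<Rightarrow> bool" where
  "proportional p q \<longleftrightarrow> (\<exists>t. case q of (a, b, c) \<Rightarrow> p = (t * a, t * b, t * c))"

definition reduced_eq_of_intersection :: "S \<Rightarrow> S \<Rightarrow> S \<Rightarrow> bool" where
  "reduced_eq_of_intersection \<alpha> f' g \<longleftrightarrow>
     (\<exists>ps :: (complex \<times> complex \<times> complex) list. \<exists>ls :: (complex \<times> complex \<times> complex) list.
        length ls = length ps
      \<and> (\<forall>i<length ps. nonzero3 (ps ! i) \<and> eval3 \<alpha> (ps ! i) = 0 \<and> eval3 f' (ps ! i) = 0)
      \<and> (\<forall>i<length ps. \<forall>j<length ps. i \<noteq> j \<longrightarrow> \<not> proportional (ps ! i) (ps ! j))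
      \<and> (\<forall>p. nonzero3 p \<and> eval3 \<alpha> p = 0 \<and> eval3 f' p = 0 \<longrightarrow>
              (\<exists>i<length ps. proportional p (ps ! i)))
      \<and> (\<forall>i<length ps. \<not> \<alpha> dvd linear_form (ls ! i) \<and> eval3 (linear_form (ls ! i)) (ps ! i) = 0)
      \<and> g = (\<Prod>i<length ps. linear_form (ls ! i)))"

end

theory Submission
  imports Defs "HOL-Computational_Algebra.Polynomial_Factorial" "HOL-Computational_Algebra.Field_as_Ring"
begin

text \<open>
  As \<open>\<alpha>\<close> is prime and does not divide \<open>f'\<close>, every \<open>\<theta> \<in> D(C)\<close> maps \<open>\<alpha>\<close> into
  \<open>(\<alpha>)\<close> and \<open>f'\<close> into \<open>(f')\<close>. Restriction to \<open>L\<close> identifies \<open>S/(\<alpha>)\<close> with \<open>C[s,t]\<close>,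
  and \<open>\<theta>\<close> induces a derivation \<open>\<eta>\<close> of \<open>C[s,t]\<close> for which the restriction \<open>F\<close> of
  \<open>f'\<close> divides \<open>\<eta>(F)\<close>. Each linear factor of \<open>g\<close> restricts to a prime \<open>p\<close> dividing
  \<open>F\<close>, because \<open>f'\<close> is homogeneous and vanishes at the point of \<open>L\<close> on that factor.
  Writing \<open>F = p\<^sup>m\<^sup>+\<^sup>1 q\<close> with \<open>q\<close> prime to \<open>p\<close>, the Leibniz rule gives
  \<open>\<eta>(F) \<equiv> (m+1) p\<^sup>m q \<eta>(p)\<close> modulo \<open>p\<^sup>m\<^sup>+\<^sup>1\<close>, so \<open>p\<close> divides \<open>\<eta>(p)\<close> since
  \<open>m+1\<close> is a unit; hence the restriction of \<open>g\<close> divides its image under \<open>\<eta>\<close>.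
  Conversely, \<open>\<rho>(\<theta>) = 0\<close> means that \<open>\<alpha>\<close> divides all coefficients of \<open>\<theta>\<close>, so
  \<open>\<theta> = \<alpha> \<theta>'\<close>, and \<open>\<theta>' \<in> D(C')\<close> because \<open>\<alpha>\<close> is coprime to \<open>f'\<close>.
\<close>

lemma map_poly_add:
  assumes "f 0 = 0" and "\<And>a b. f (a + b) = f a + f b"
  shows "map_poly f (p + q) = map_poly f p + map_poly f q"
  by (intro poly_eqI) (simp add: coeff_map_poly assms)

lemma map_poly_mult:
  fixes f :: "'a::comm_ring_1 \<Rightarrow> 'b::comm_ring_1"
  assumes "f 0 = 0" and "\<And>a b. f (a + b) = f a + f b" and "\<And>a b. f (a * b) = f a * f b"
  shows "map_poly f (p * q) = map_poly f p * map_poly f q"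
  by (induction p)
    (simp_all add: map_poly_add[of f, OF assms(1,2)] map_poly_smult map_poly_pCons assms)

lemma poly_map_poly_hom:
  assumes "f 0 = 0" and "\<And>a b. f (a + b) = f a + f b" and "\<And>a b. f (a * b) = f a * f b"
  shows "poly (map_poly f p) (f x) = f (poly p x)"
  by (induction p) (simp_all add: map_poly_pCons assms)

lemma map_poly_eq_0_iff_const_dvd:
  fixes a :: "'a::{comm_semiring_1, semiring_no_zero_divisors}"
  assumes "f 0 = 0" and "\<And>q. f q = 0 \<longleftrightarrow> a dvd q"
  shows "map_poly f p = 0 \<longleftrightarrow> [:a:] dvd p"
proof -
  have "map_poly f p = 0 \<longleftrightarrow> (\<forall>n. f (coeff p n) = 0)"
    by (simp add: poly_eq_iff coeff_map_poly assms(1))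
  also have "\<dots> \<longleftrightarrow> [:a:] dvd p"
    by (simp only: assms(2) const_poly_dvd_iff)
  finally show ?thesis .
qed

lemma linear_poly_times_unit_dvd_iff:
  assumes "is_unit u"
  shows "[:- c, 1:] * u dvd p \<longleftrightarrow> poly p c = 0"
  by (simp only: mult_unit_dvd_iff[OF assms] poly_eq_0_iff_dvd)

lemma pCons_0_const_dvd_iff:
  fixes a :: "'a::field"
  assumes "a \<noteq> 0"
  shows "[:0, a:] dvd p \<longleftrightarrow> poly p 0 = 0"
  using linear_poly_times_unit_dvd_iff[of "[:a:]" 0 p] assms
  by (simp add: is_unit_const_poly_iff dvd_field_iff)

lemma prime_elem_if_kernel_of_hom:
  fixes \<psi> :: "'a::comm_semiring_1 \<Rightarrow> 'b::idom"
  assumes "\<And>a b. \<psi> (a * b) = \<psi> a * \<psi> b" and "\<psi> 1 \<noteq> 0"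
    and "\<And>a. \<psi> a = 0 \<longleftrightarrow> p dvd a" and "p \<noteq> 0"
  shows "prime_elem p"
  unfolding prime_elem_def
proof (intro conjI allI impI)
  show "\<not> p dvd 1"
    using assms(2) assms(3)[of 1] by simp
  show "p dvd a \<or> p dvd b" if "p dvd a * b" for a b
  proof -
    have "\<psi> (a * b) = 0"
      using that assms(3)[of "a * b"] by simp
    then have "\<psi> a = 0 \<or> \<psi> b = 0"
      using assms(1) by simp
    then show ?thesis
      using assms(3)[of a] assms(3)[of b] by simp
  qed
qed (fact assms(4))

section \<open>Derivations\<close>

locale derivation =
  fixes D :: "'a::comm_ring_1 \<Rightarrow> 'a"
  assumes additive: "D (a + b) = D a + D b"
    and leibniz: "D (a * b) = a * D b + b * D a"
begin

lemma zero [simp]: "D 0 = 0"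
  using additive[of 0 0] by simp

lemma one [simp]: "D 1 = 0"
  using leibniz[of 1 1] by simp

lemma diff: "D (a - b) = D a - D b"
  using additive[of "a - b" b] by simp

lemma power_rule: "D (a ^ Suc m) = of_nat (Suc m) * a ^ m * D a"
  by (induction m) (simp_all add: leibniz[of a] algebra_simps)

lemma prod_dvd:
  assumes "finite A" and "\<And>i. i \<in> A \<Longrightarrow> l i dvd D (l i)"
  shows "prod l A dvd D (prod l A)"
  using assms
proof (induction A rule: finite_induct)
  case (insert i A)
  then have "l i * prod l A dvd l i * D (prod l A)" and "l i * prod l A dvd prod l A * D (l i)"
    by (simp_all add: mult.commute mult_dvd_mono)
  then show ?case using insert.hyps by (simp add: leibniz)
qed simp

end

lemma prime_factor_dvd_derivation:
  fixes D :: "'a::{factorial_semiring, idom} \<Rightarrow> 'a"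
  assumes "derivation D" and of_nat_unit: "\<And>n. is_unit (of_nat (Suc n) :: 'a)"
    and "x \<noteq> 0" and p: "prime_elem p" and "p dvd x" and "x dvd D x"
  shows "p dvd D p"
proof -
  interpret derivation D by fact
  have "\<not> is_unit p" using p by (simp add: prime_elem_not_unit)
  obtain q where xq: "x = p ^ multiplicity p x * q" and "\<not> p dvd q"
    using multiplicity_decompose'[OF \<open>x \<noteq> 0\<close> \<open>\<not> is_unit p\<close>] by blast
  obtain m where m: "multiplicity p x = Suc m"
    using multiplicity_gt_zero_iff[OF \<open>x \<noteq> 0\<close> \<open>\<not> is_unit p\<close>] \<open>p dvd x\<close>
    by (cases "multiplicity p x") auto
  have "D x = p ^ Suc m * D q + q * (of_nat (Suc m) * p ^ m * D p)"
    by (subst xq) (simp only: m leibniz power_rule)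
  also have "\<dots> = p ^ m * (p * D q + q * of_nat (Suc m) * D p)"
    by (simp add: algebra_simps)
  finally have "D x = p ^ m * (p * D q + q * of_nat (Suc m) * D p)" .
  moreover have "p ^ m * p dvd D x"
    using \<open>x dvd D x\<close> xq m by (metis dvd_mult_left power_Suc2)
  ultimately have "p dvd p * D q + q * of_nat (Suc m) * D p"
    using p by (simp add: prime_elem_def)
  then have "p dvd q * of_nat (Suc m) * D p"
    by (simp add: dvd_add_right_iff)
  moreover have "\<not> p dvd of_nat (Suc m)"
    using of_nat_unit \<open>\<not> is_unit p\<close> dvd_unit_imp_unit by blast
  ultimately show ?thesis
    using p \<open>\<not> p dvd q\<close> by (metis prime_elem_dvd_mult_iff)
qed

lemma derivation_pderiv: "derivation (pderiv :: 'a::idom poly \<Rightarrow> 'a poly)"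
  by unfold_locales (simp_all add: pderiv_add pderiv_mult)

lemma derivation_map_poly:
  assumes "derivation D"
  shows "derivation (map_poly D)"
proof -
  interpret derivation D by fact
  have add: "map_poly D (p + q) = map_poly D p + map_poly D q" for p q
    by (rule map_poly_add) (simp_all add: additive)
  have smult: "map_poly D (smult c q) = smult c (map_poly D q) + smult (D c) q" for c q
    by (intro poly_eqI) (simp add: coeff_map_poly leibniz mult.commute)
  show ?thesis
  proof unfold_locales
    show "map_poly D (p * q) = p * map_poly D q + q * map_poly D p" for p q
      by (induction p) (simp_all add: add smult map_poly_pCons algebra_simps)
  qed (rule add)
qed

lemma derivation_der_apply: "derivation (der_apply \<theta>)"
proof -
  interpret X: derivation dX unfolding dX_def by (intro derivation_map_poly derivation_pderiv)
  interpret Y: derivation dY unfolding dY_def by (intro derivation_map_poly derivation_pderiv)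
  interpret Z: derivation dZ unfolding dZ_def by (rule derivation_pderiv)
  show ?thesis
    by unfold_locales
      (simp_all add: der_apply_def X.additive Y.additive Z.additive X.leibniz Y.leibniz Z.leibniz
        algebra_simps split: prod.split)
qed

interpretation der_apply: derivation "der_apply \<theta>" for \<theta>
  by (rule derivation_der_apply)

lemma der_apply_const3 [simp]: "der_apply \<theta> (const3 c) = 0"
  by (cases \<theta>) (simp add: der_apply_def const3_def dX_def dY_def dZ_def map_poly_pCons)

lemma der_apply_varX: "der_apply (a, b, c) varX = a"
  by (simp add: der_apply_def varX_def dX_def dY_def dZ_def map_poly_pCons map_poly_1 pderiv_pCons pCons_one)

lemma der_apply_varY: "der_apply (a, b, c) varY = b"
  by (simp add: der_apply_def varY_def dX_def dY_def dZ_def map_poly_pCons map_poly_1 pderiv_pCons pCons_one)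

lemma der_apply_varZ: "der_apply (a, b, c) varZ = c"
  by (simp add: der_apply_def varZ_def dX_def dY_def dZ_def map_poly_pCons map_poly_1 pderiv_pCons pCons_one)

lemma der_apply_der_smult: "der_apply (der_smult s \<theta>) h = s * der_apply \<theta> h"
  by (cases \<theta>) (simp add: der_apply_def der_smult_def algebra_simps)

lemma der_apply_der_add: "der_apply (der_add \<theta> \<theta>') h = der_apply \<theta> h + der_apply \<theta>' h"
  by (cases \<theta>, cases \<theta>') (simp add: der_apply_def der_add_def algebra_simps)

lemma der_smult_mem_DC_mult: "\<theta> \<in> DC f \<Longrightarrow> der_smult a \<theta> \<in> DC (f * a)"
  by (auto simp: DC_def der_apply_der_smult der_apply.leibniz mult.commute mult_dvd_mono)

lemma inj_der_smult: "a \<noteq> 0 \<Longrightarrow> inj (der_smult a)"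
  by (rule injI) (auto simp: der_smult_def split: prod.splits)

lemma DC_mult_prime_elemD:
  assumes "prime_elem \<alpha>" and "\<not> \<alpha> dvd f" and "\<theta> \<in> DC (f * \<alpha>)"
  shows "\<alpha> dvd der_apply \<theta> \<alpha>" and "f dvd der_apply \<theta> f"
proof -
  have div: "f * \<alpha> dvd f * der_apply \<theta> \<alpha> + \<alpha> * der_apply \<theta> f"
    using assms(3) by (simp add: DC_def der_apply.leibniz)
  then have "\<alpha> dvd f * der_apply \<theta> \<alpha>"
    by (metis dvd_add_left_iff dvd_mult_right dvd_triv_left)
  then show "\<alpha> dvd der_apply \<theta> \<alpha>"
    using assms(1,2) prime_elem_dvd_mult_iff by blast
  then obtain r where "der_apply \<theta> \<alpha> = \<alpha> * r" ..
  with div have "f * \<alpha> dvd \<alpha> * (f * r + der_apply \<theta> f)"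
    by (simp add: algebra_simps)
  then have "f dvd f * r + der_apply \<theta> f"
    using assms(1) by (simp add: mult.commute)
  then show "f dvd der_apply \<theta> f"
    by (simp add: dvd_add_right_iff)
qed

lemma mem_DC_if_der_smult_mem_DC_mult:
  assumes "prime_elem \<alpha>" and "\<not> \<alpha> dvd f" and "der_smult \<alpha> \<theta> \<in> DC (f * \<alpha>)"
  shows "\<theta> \<in> DC f"
proof -
  have "f dvd \<alpha> * der_apply \<theta> f"
    using DC_mult_prime_elemD(2)[OF assms] by (simp add: der_apply_der_smult)
  moreover have "coprime f \<alpha>"
    using prime_elem_imp_coprime[OF assms(1,2)] by (simp add: coprime_commute)
  ultimately show ?thesis
    by (simp add: DC_def coprime_dvd_mult_right_iff)
qed

section \<open>Reduction modulo a linear form\<close>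

lemma quot_eq_iff: "quot \<alpha> a = quot \<alpha> b \<longleftrightarrow> \<alpha> dvd a - b"
proof
  assume "quot \<alpha> a = quot \<alpha> b"
  moreover have "a \<in> quot \<alpha> a"
    unfolding quot_def by (auto intro: exI[of _ 0])
  ultimately obtain k where "a = b + \<alpha> * k"
    unfolding quot_def by auto
  then show "\<alpha> dvd a - b" by simp
next
  assume "\<alpha> dvd a - b"
  then obtain c where c: "a = b + \<alpha> * c"
    by (metis dvdE add_diff_cancel_left' diff_add_cancel)
  have "a + \<alpha> * k = b + \<alpha> * (c + k)" "b + \<alpha> * k = a + \<alpha> * (k - c)" for k
    using c by (simp_all add: algebra_simps)
  then show "quot \<alpha> a = quot \<alpha> b"
    unfolding quot_def by blast
qed

lemma qplus_quot: "qplus (quot \<alpha> a) (quot \<alpha> b) = quot \<alpha> (a + b)"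
proof -
  have "(a + \<alpha> * k) + (b + \<alpha> * l) = (a + b) + \<alpha> * (k + l)" for k l
    by (simp add: algebra_simps)
  moreover have "(a + b) + \<alpha> * k = (a + \<alpha> * k) + (b + \<alpha> * 0)" for k
    by simp
  ultimately show ?thesis
    unfolding qplus_def quot_def by blast
qed

lemma qtimes_quot: "qtimes \<alpha> (quot \<alpha> a) (quot \<alpha> b) = quot \<alpha> (a * b)"
proof -
  have "(a + \<alpha> * k) * (b + \<alpha> * l) + \<alpha> * m = a * b + \<alpha> * (a * l + k * b + \<alpha> * k * l + m)" for k l m
    by (simp add: algebra_simps)
  moreover have "a * b + \<alpha> * k = (a + \<alpha> * 0) * (b + \<alpha> * 0) + \<alpha> * k" for k
    by simp
  ultimately show ?thesis
    unfolding qtimes_def quot_def by blast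
qed

lemma quot_in_Sbar [simp]: "quot \<alpha> h \<in> Sbar \<alpha>"
  by (simp add: Sbar_def)

lemma rho_quot:
  assumes "\<alpha> dvd der_apply \<theta> \<alpha>"
  shows "rho \<alpha> \<theta> (quot \<alpha> h) = quot \<alpha> (der_apply \<theta> h)"
proof -
  define h' where "h' = (SOME h'. quot \<alpha> h = quot \<alpha> h')"
  have "quot \<alpha> h = quot \<alpha> h'"
    unfolding h'_def by (rule someI_ex) auto
  then obtain c where "h' - h = \<alpha> * c"
    by (metis dvdE quot_eq_iff)
  then have "der_apply \<theta> h' - der_apply \<theta> h = \<alpha> * der_apply \<theta> c + c * der_apply \<theta> \<alpha>"
    by (metis der_apply.diff der_apply.leibniz)
  then have "\<alpha> dvd der_apply \<theta> h' - der_apply \<theta> h"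
    using assms by simp
  then show ?thesis
    unfolding rho_def h'_def[symmetric] by (simp add: quot_eq_iff)
qed

lemma rho_der_add: "rho \<alpha> (der_add \<theta> \<theta>') u = qplus (rho \<alpha> \<theta> u) (rho \<alpha> \<theta>' u)"
  by (simp add: rho_def der_apply_der_add qplus_quot)

lemma rho_der_smult: "rho \<alpha> (der_smult s \<theta>) u = qtimes \<alpha> (quot \<alpha> s) (rho \<alpha> \<theta> u)"
  by (simp add: rho_def der_apply_der_smult qtimes_quot)

lemma rho_der_smult_self: "rho \<alpha> (der_smult \<alpha> \<theta>) u = quot \<alpha> 0"
  by (simp add: rho_def der_apply_der_smult quot_eq_iff)

lemma rho_mem_DerSbar:
  assumes "\<alpha> dvd der_apply \<theta> \<alpha>"
  shows "rho \<alpha> \<theta> \<in> DerSbar \<alpha>"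
  unfolding DerSbar_def
proof (intro CollectI conjI ballI allI)
  fix u w assume "u \<in> Sbar \<alpha>" "w \<in> Sbar \<alpha>"
  then obtain a b where "u = quot \<alpha> a" "w = quot \<alpha> b"
    by (auto simp: Sbar_def)
  then show "rho \<alpha> \<theta> (qplus u w) = qplus (rho \<alpha> \<theta> u) (rho \<alpha> \<theta> w)"
    and "rho \<alpha> \<theta> (qtimes \<alpha> u w) = qplus (qtimes \<alpha> u (rho \<alpha> \<theta> w)) (qtimes \<alpha> (rho \<alpha> \<theta> u) w)"
    by (simp_all add: qplus_quot qtimes_quot rho_quot[OF assms] der_apply.additive
        der_apply.leibniz mult.commute)
qed (simp add: rho_def, simp add: rho_quot[OF assms])

lemma der_smult_if_rho_vanishes:
  assumes "\<alpha> dvd der_apply \<theta> \<alpha>" and "\<forall>u\<in>Sbar \<alpha>. rho \<alpha> \<theta> u = quot \<alpha> 0"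
  obtains \<theta>' where "\<theta> = der_smult \<alpha> \<theta>'"
proof -
  obtain a b c where abc: "\<theta> = (a, b, c)"
    by (cases \<theta>) auto
  have "\<alpha> dvd der_apply \<theta> h" for h
    using assms(2) rho_quot[OF assms(1), of h] by (simp add: quot_eq_iff)
  then have "\<alpha> dvd a" "\<alpha> dvd b" "\<alpha> dvd c"
    using abc der_apply_varX der_apply_varY der_apply_varZ by metis+
  then obtain a' b' c' where "a = \<alpha> * a'" "b = \<alpha> * b'" "c = \<alpha> * c'"
    by (elim dvdE)
  then show ?thesis
    using that[of "(a', b', c')"] abc by (simp add: der_smult_def)
qed

lemma rho_vanishes_iff:
  assumes "prime_elem \<alpha>" and "\<not> \<alpha> dvd f" and "\<theta> \<in> DC (f * \<alpha>)"
  shows "(\<forall>u\<in>Sbar \<alpha>. rho \<alpha> \<theta> u = quot \<alpha> 0) \<longleftrightarrow> (\<exists>\<theta>'\<in>DC f. \<theta> = der_smult \<alpha> \<theta>')"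
proof
  assume "\<forall>u\<in>Sbar \<alpha>. rho \<alpha> \<theta> u = quot \<alpha> 0"
  with DC_mult_prime_elemD(1)[OF assms] obtain \<theta>' where "\<theta> = der_smult \<alpha> \<theta>'"
    by (rule der_smult_if_rho_vanishes)
  moreover from this have "\<theta>' \<in> DC f"
    using mem_DC_if_der_smult_mem_DC_mult[OF assms(1,2)] assms(3) by simp
  ultimately show "\<exists>\<theta>'\<in>DC f. \<theta> = der_smult \<alpha> \<theta>'" by blast
qed (auto simp: rho_der_smult_self)

definition scale3 :: "complex \<Rightarrow> complex \<times> complex \<times> complex \<Rightarrow> complex \<times> complex \<times> complex" where
  "scale3 c p = (case p of (x, y, z) \<Rightarrow> (c * x, c * y, c * z))"

lemma eval3_linear_form: "eval3 (linear_form (a, b, c)) (x, y, z) = a * x + b * y + c * z"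
  by (simp add: eval3_def linear_form_def const3_def varX_def varY_def varZ_def)

lemma linear_form_expand: "linear_form (a, b, c) = [:[:[:0, a:], [:b:]:], [:[:c:]:]:]"
  by (simp add: linear_form_def const3_def varX_def varY_def varZ_def)

lemma linear_form_eq_0_iff: "linear_form v = 0 \<longleftrightarrow> \<not> nonzero3 v"
  by (cases v) (auto simp: linear_form_def const3_def varX_def varY_def varZ_def nonzero3_def)

lemma poly_const_poly_altdef:
  fixes p :: "'a::comm_semiring_1 poly poly"
  shows "poly (poly p [:y:]) x = (\<Sum>j\<le>degree p. poly (coeff p j) x * y ^ j)"
  by (simp add: poly_altdef[of p] poly_sum)

lemma eval3_altdef:
  "eval3 f (x, y, z) = (\<Sum>k\<le>degree f. \<Sum>j\<le>degree (coeff f k). \<Sum>i\<le>degree (coeff (coeff f k) j).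
      coeff3 f i j k * x ^ i * y ^ j * z ^ k)"
proof -
  have "eval3 f (x, y, z) = (\<Sum>k\<le>degree f. poly (poly (coeff f k) [:y:]) x * z ^ k)"
    by (simp add: eval3_def poly_const_poly_altdef[of f] poly_sum)
  then show ?thesis
    by (simp add: poly_const_poly_altdef poly_altdef[of "coeff (coeff f _) _"]
        coeff3_def sum_distrib_right mult.assoc)
qed

lemma eval3_scale3_homogeneous:
  assumes "homogeneous3 d f"
  shows "eval3 f (scale3 c p) = c ^ d * eval3 f p"
proof -
  have scale: "coeff3 f i j k * (c * x) ^ i * (c * y) ^ j * (c * z) ^ k
      = c ^ d * (coeff3 f i j k * x ^ i * y ^ j * z ^ k)" for i j k x y z
    using assms
    by (cases "coeff3 f i j k = 0")
      (auto simp: homogeneous3_def power_add[symmetric] algebra_simps)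
  show ?thesis
    by (cases p) (simp only: scale3_def prod.case eval3_altdef scale sum_distrib_left)
qed

text \<open>\<open>R\<close> is \<open>C[s,t] \<cong> S/(\<alpha>)\<close>, nested like \<open>S\<close>: \<open>t\<close> is the outer variable.\<close>

type_synonym R = "complex poly poly"

definition eval2 :: "R \<Rightarrow> complex \<times> complex \<Rightarrow> complex" where
  "eval2 r p = (case p of (s, t) \<Rightarrow> poly (poly r [:t:]) s)"

definition linear_form2 :: "complex \<Rightarrow> complex \<Rightarrow> R" where
  "linear_form2 a b = [:[:0, a:], [:b:]:]"

lemma eval2_linear_form2: "eval2 (linear_form2 a b) (s, t) = a * s + b * t"
  by (simp add: eval2_def linear_form2_def algebra_simps)

lemma is_unit_of_nat_R: "is_unit (of_nat (Suc n) :: R)"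
  by (simp add: of_nat_poly is_unit_const_poly_iff dvd_field_iff del: of_nat_Suc)

lemma poly_poly_eq_eval2: "poly (poly r c) s = eval2 r (s, poly c s)"
  by (induction r) (simp_all add: eval2_def algebra_simps)

lemma poly_map_poly_poly_0: "poly (map_poly (\<lambda>p. poly p 0) r) t = eval2 r (0, t)"
  by (induction r) (simp_all add: eval2_def map_poly_pCons algebra_simps poly_0_coeff_0)

lemma eval2_poly: "eval2 (poly h c) (s, t) = eval3 h (s, t, eval2 c (s, t))"
  by (induction h) (simp_all add: eval2_def eval3_def algebra_simps)

lemma linear_form2_restriction:
  assumes "(a, b) \<noteq> (0, 0)"
  obtains \<psi> :: "R \<Rightarrow> complex poly" and \<gamma> :: "complex \<Rightarrow> complex \<times> complex"
  where "\<And>x y. \<psi> (x * y) = \<psi> x * \<psi> y" and "\<psi> 1 = 1"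
    and "\<And>r. \<psi> r = 0 \<longleftrightarrow> linear_form2 a b dvd r"
    and "\<And>r u. poly (\<psi> r) u = eval2 r (\<gamma> u)"
proof (cases "b = 0")
  case False
  define c where "c = [:0, - a / b:]"
  have factor: "linear_form2 a b = [:- c, 1:] * [:[:b:]:]"
    using False by (simp add: linear_form2_def c_def)
  have "is_unit [:[:b:]:]"
    using False by (simp add: is_unit_const_poly_iff dvd_field_iff)
  then have "poly r c = 0 \<longleftrightarrow> linear_form2 a b dvd r" for r
    unfolding factor by (simp only: linear_poly_times_unit_dvd_iff)
  then show ?thesis
    by (intro that[of "\<lambda>r. poly r c" "\<lambda>u. (u, poly c u)"]) (simp_all add: poly_poly_eq_eval2)
next
  case True
  with assms have "a \<noteq> 0" by simp
  define \<psi> where "\<psi> = map_poly (\<lambda>p. poly p (0::complex))"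
  have "\<psi> (x * y) = \<psi> x * \<psi> y" for x y
    unfolding \<psi>_def by (rule map_poly_mult) simp_all
  moreover have "\<psi> r = 0 \<longleftrightarrow> linear_form2 a b dvd r" for r
    unfolding \<psi>_def using True \<open>a \<noteq> 0\<close>
    by (simp add: map_poly_eq_0_iff_const_dvd pCons_0_const_dvd_iff linear_form2_def)
  ultimately show ?thesis
    by (intro that[of \<psi> "\<lambda>u. (0, u)"]) (simp_all add: \<psi>_def poly_map_poly_poly_0)
qed

lemma prime_elem_linear_form2:
  assumes "(a, b) \<noteq> (0, 0)"
  shows "prime_elem (linear_form2 a b)"
proof -
  obtain \<psi> :: "R \<Rightarrow> complex poly" and \<gamma> :: "complex \<Rightarrow> complex \<times> complex"
    where "\<And>x y. \<psi> (x * y) = \<psi> x * \<psi> y" and "\<psi> 1 = 1"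
      and "\<And>r. \<psi> r = 0 \<longleftrightarrow> linear_form2 a b dvd r"
      and "\<And>r u. poly (\<psi> r) u = eval2 r (\<gamma> u)"
    using linear_form2_restriction[OF assms] by blast
  then show ?thesis
    using assms by (intro prime_elem_if_kernel_of_hom[of \<psi>]) (simp_all add: linear_form2_def)
qed

lemma linear_form2_dvd_if_vanishing:
  assumes "(a, b) \<noteq> (0, 0)" and "\<And>s t. a * s + b * t = 0 \<Longrightarrow> eval2 r (s, t) = 0"
  shows "linear_form2 a b dvd r"
proof -
  obtain \<psi> :: "R \<Rightarrow> complex poly" and \<gamma> :: "complex \<Rightarrow> complex \<times> complex"
    where "\<And>x y. \<psi> (x * y) = \<psi> x * \<psi> y" and "\<psi> 1 = 1"
      and kernel: "\<And>r. \<psi> r = 0 \<longleftrightarrow> linear_form2 a b dvd r"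
      and eval: "\<And>r u. poly (\<psi> r) u = eval2 r (\<gamma> u)"
    using linear_form2_restriction[OF assms(1)] by blast
  have on_line: "eval2 (linear_form2 a b) (\<gamma> u) = 0" for u
    using eval[of "linear_form2 a b"] kernel[of "linear_form2 a b"] by simp
  have "poly (\<psi> r) u = 0" for u
    using assms(2) eval[of r u] on_line[of u] by (cases "\<gamma> u") (simp add: eval2_linear_form2)
  then show ?thesis
    using kernel poly_all_0_iff_0 by blast
qed

lemma proportional_if_same_linear_equation:
  fixes a b p1 p2 s t :: complex
  assumes "(a, b) \<noteq> (0, 0)" and "(p1, p2) \<noteq> (0, 0)"
    and "a * p1 + b * p2 = 0" and "a * s + b * t = 0"
  obtains c where "s = c * p1" and "t = c * p2"
proof (cases "b = 0")
  case False
  have "p1 \<noteq> 0"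
    using assms(2,3) False by auto
  have "b * (p1 * t - p2 * s) = p1 * (a * s + b * t) - s * (a * p1 + b * p2)"
    by (simp add: algebra_simps)
  then have "p1 * t = p2 * s"
    using assms(3,4) False by simp
  then show ?thesis
    using \<open>p1 \<noteq> 0\<close> by (intro that[of "s / p1"]) (simp_all add: field_simps)
next
  case True
  with assms(1) have "a \<noteq> 0"
    by simp
  with True assms(3,4) have "p1 = 0" "s = 0"
    by simp_all
  with assms(2) have "p2 \<noteq> 0"
    by simp
  with \<open>p1 = 0\<close> \<open>s = 0\<close> show ?thesis
    by (intro that[of "t / p2"]) simp_all
qed

section \<open>Restriction to the line\<close>

text \<open>
  \<open>\<phi>\<close> is the reduction \<open>S \<rightarrow> S/(\<alpha>) \<cong> R\<close> with a section \<open>\<sigma>\<close>, and \<open>\<pi>\<close> is a linear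
  parametrisation of the plane \<open>\<alpha> = 0\<close> in \<open>C\<^sup>3\<close> under which \<open>\<phi>\<close> is restriction of functions.
\<close>

locale line_restriction =
  fixes \<alpha> :: S and \<phi> :: "S \<Rightarrow> R" and \<sigma> :: "R \<Rightarrow> S"
    and \<pi> :: "complex \<times> complex \<Rightarrow> complex \<times> complex \<times> complex"
  assumes hom_add: "\<phi> (a + b) = \<phi> a + \<phi> b"
    and hom_mult: "\<phi> (a * b) = \<phi> a * \<phi> b"
    and hom_one: "\<phi> 1 = 1"
    and kernel: "\<phi> h = 0 \<longleftrightarrow> \<alpha> dvd h"
    and right_inverse: "\<phi> (\<sigma> r) = r"
    and eval2_hom: "eval2 (\<phi> h) q = eval3 h (\<pi> q)"
    and param_scale: "\<pi> (c * s, c * t) = scale3 c (\<pi> (s, t))"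
    and param_onto: "eval3 \<alpha> p = 0 \<Longrightarrow> \<exists>q. \<pi> q = p"
    and linear_form_hom: "\<exists>a b. \<phi> (linear_form w) = linear_form2 a b"
begin

lemma hom_diff: "\<phi> (a - b) = \<phi> a - \<phi> b"
  using hom_add[of "a - b" b] by simp

lemma hom_prod: "\<phi> (prod l A) = (\<Prod>i\<in>A. \<phi> (l i))"
  by (induction A rule: infinite_finite_induct) (simp_all add: hom_one hom_mult)

lemma param_zero: "\<pi> (0, 0) = (0, 0, 0)"
proof -
  have "\<pi> (0, 0) = scale3 0 (\<pi> (0, 0))"
    using param_scale[of 0 0 0] by (simp only: mult_zero_left)
  also have "\<dots> = (0, 0, 0)"
    by (cases "\<pi> (0, 0)") (simp add: scale3_def)
  finally show ?thesis .
qed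

lemma prime_elem_alpha:
  assumes "\<alpha> \<noteq> 0"
  shows "prime_elem \<alpha>"
  by (rule prime_elem_if_kernel_of_hom[of \<phi>]) (simp_all add: hom_mult hom_one kernel assms)

lemma induced_derivation:
  assumes "derivation D" and "\<alpha> dvd D \<alpha>"
  shows "\<phi> (D (\<sigma> (\<phi> h))) = \<phi> (D h)" and "derivation (\<lambda>r. \<phi> (D (\<sigma> r)))"
proof -
  interpret derivation D by fact
  show compat: "\<phi> (D (\<sigma> (\<phi> h))) = \<phi> (D h)" for h
  proof -
    have "\<alpha> dvd \<sigma> (\<phi> h) - h"
      using kernel[of "\<sigma> (\<phi> h) - h"] by (simp add: hom_diff right_inverse)
    then obtain k where "\<sigma> (\<phi> h) - h = \<alpha> * k" ..
    then have "D (\<sigma> (\<phi> h)) - D h = \<alpha> * D k + k * D \<alpha>"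
      by (metis diff leibniz)
    then have "\<alpha> dvd D (\<sigma> (\<phi> h)) - D h"
      using assms(2) by simp
    then show ?thesis
      using kernel[of "D (\<sigma> (\<phi> h)) - D h"] by (simp add: hom_diff)
  qed
  show "derivation (\<lambda>r. \<phi> (D (\<sigma> r)))"
  proof unfold_locales
    fix r s
    have "\<phi> (D (\<sigma> (r + s))) = \<phi> (D (\<sigma> (\<phi> (\<sigma> r + \<sigma> s))))"
      by (simp add: hom_add right_inverse)
    also have "\<dots> = \<phi> (D (\<sigma> r)) + \<phi> (D (\<sigma> s))"
      unfolding compat by (simp add: additive hom_add)
    finally show "\<phi> (D (\<sigma> (r + s))) = \<phi> (D (\<sigma> r)) + \<phi> (D (\<sigma> s))" .
    have "\<phi> (D (\<sigma> (r * s))) = \<phi> (D (\<sigma> (\<phi> (\<sigma> r * \<sigma> s))))"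
      by (simp add: hom_mult right_inverse)
    also have "\<dots> = r * \<phi> (D (\<sigma> s)) + s * \<phi> (D (\<sigma> r))"
      unfolding compat by (simp add: leibniz hom_add hom_mult right_inverse)
    finally show "\<phi> (D (\<sigma> (r * s))) = r * \<phi> (D (\<sigma> s)) + s * \<phi> (D (\<sigma> r))" .
  qed
qed

lemma homogeneous_restriction_vanishes:
  assumes "homogeneous3 d f" and "nonzero3 p" and "eval3 \<alpha> p = 0" and "eval3 f p = 0"
    and "\<phi> l = linear_form2 a b" and "(a, b) \<noteq> (0, 0)" and "eval3 l p = 0"
    and "a * s + b * t = 0"
  shows "eval2 (\<phi> f) (s, t) = 0"
proof -
  obtain p1 p2 where p: "\<pi> (p1, p2) = p"
    using param_onto[OF assms(3)] by auto
  have "(p1, p2) \<noteq> (0, 0)"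
    using p param_zero assms(2) by (auto simp: nonzero3_def)
  moreover have "a * p1 + b * p2 = 0"
    using eval2_hom[of l "(p1, p2)"] assms(5,7) p by (simp add: eval2_linear_form2)
  ultimately obtain c where "s = c * p1" and "t = c * p2"
    using proportional_if_same_linear_equation assms(6,8) by metis
  then have "eval2 (\<phi> f) (s, t) = eval3 f (scale3 c p)"
    using eval2_hom param_scale p by simp
  also have "\<dots> = 0"
    using eval3_scale3_homogeneous[OF assms(1)] assms(4) by simp
  finally show ?thesis .
qed

lemma restricted_linear_form_prime_factor:
  assumes "homogeneous3 d f" and "nonzero3 p" and "eval3 \<alpha> p = 0" and "eval3 f p = 0"
    and "eval3 (linear_form w) p = 0" and "\<not> \<alpha> dvd linear_form w"
  shows "prime_elem (\<phi> (linear_form w))" and "\<phi> (linear_form w) dvd \<phi> f"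
proof -
  obtain a b where ab: "\<phi> (linear_form w) = linear_form2 a b"
    using linear_form_hom by blast
  have "(a, b) \<noteq> (0, 0)"
  proof
    assume "(a, b) = (0, 0)"
    then have "\<phi> (linear_form w) = 0"
      using ab by (simp add: linear_form2_def)
    then show False
      using kernel assms(6) by simp
  qed
  then show "prime_elem (\<phi> (linear_form w))"
    using ab prime_elem_linear_form2 by simp
  have "linear_form2 a b dvd \<phi> f"
    using linear_form2_dvd_if_vanishing \<open>(a, b) \<noteq> (0, 0)\<close>
      homogeneous_restriction_vanishes[OF assms(1-4) ab \<open>(a, b) \<noteq> (0, 0)\<close> assms(5)]
    by blast
  then show "\<phi> (linear_form w) dvd \<phi> f"
    using ab by simp
qed

lemma prod_dvd_derivation_mod_alpha:
  assumes "derivation D" and "\<alpha> dvd D \<alpha>" and "f dvd D f" and "\<not> \<alpha> dvd f" and "finite A"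
    and factors: "\<And>i. i \<in> A \<Longrightarrow> prime_elem (\<phi> (l i)) \<and> \<phi> (l i) dvd \<phi> f"
  obtains h where "\<alpha> dvd D (prod l A) - prod l A * h"
proof -
  define \<eta> where "\<eta> r = \<phi> (D (\<sigma> r))" for r
  have \<eta>: "derivation \<eta>" and \<eta>_hom: "\<eta> (\<phi> h) = \<phi> (D h)" for h
    unfolding \<eta>_def using induced_derivation[OF assms(1,2)] by simp_all
  obtain k where "D f = f * k"
    using assms(3) ..
  then have "\<phi> f dvd \<eta> (\<phi> f)"
    by (simp add: \<eta>_hom hom_mult)
  moreover have "\<phi> f \<noteq> 0"
    using kernel assms(4) by simp
  ultimately have "\<phi> (l i) dvd \<eta> (\<phi> (l i))" if "i \<in> A" for i
    using prime_factor_dvd_derivation[OF \<eta> is_unit_of_nat_R] factors[OF that] by blast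
  then have "(\<Prod>i\<in>A. \<phi> (l i)) dvd \<eta> (\<Prod>i\<in>A. \<phi> (l i))"
    by (rule derivation.prod_dvd[OF \<eta> assms(5)])
  then obtain H where "\<phi> (D (prod l A)) = \<phi> (prod l A) * H"
    by (auto simp: hom_prod[symmetric] \<eta>_hom)
  then have "\<phi> (D (prod l A) - prod l A * \<sigma> H) = 0"
    by (simp add: hom_diff hom_mult right_inverse)
  then show ?thesis
    using that kernel by blast
qed

lemma rho_mem_DCpp:
  assumes "\<alpha> \<noteq> 0" and "homogeneous3 d f" and "\<not> \<alpha> dvd f"
    and "reduced_eq_of_intersection \<alpha> f g" and "\<theta> \<in> DC (f * \<alpha>)"
  shows "rho \<alpha> \<theta> \<in> DCpp \<alpha> g"
proof -
  note DC = DC_mult_prime_elemD[OF prime_elem_alpha[OF assms(1)] assms(3,5)]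
  obtain ps ls where
    points: "\<forall>i<length ps. nonzero3 (ps ! i) \<and> eval3 \<alpha> (ps ! i) = 0 \<and> eval3 f (ps ! i) = 0"
    and lines: "\<forall>i<length ps. \<not> \<alpha> dvd linear_form (ls ! i) \<and> eval3 (linear_form (ls ! i)) (ps ! i) = 0"
    and g: "g = (\<Prod>i<length ps. linear_form (ls ! i))"
    using assms(4) unfolding reduced_eq_of_intersection_def by blast
  have "prime_elem (\<phi> (linear_form (ls ! i))) \<and> \<phi> (linear_form (ls ! i)) dvd \<phi> f"
    if "i \<in> {..<length ps}" for i
  proof -
    from that points lines
    have "nonzero3 (ps ! i)" "eval3 \<alpha> (ps ! i) = 0" "eval3 f (ps ! i) = 0"
      "eval3 (linear_form (ls ! i)) (ps ! i) = 0" "\<not> \<alpha> dvd linear_form (ls ! i)"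
      by auto
    then show ?thesis
      using restricted_linear_form_prime_factor[OF assms(2)] by blast
  qed
  then obtain h where "\<alpha> dvd der_apply \<theta> g - g * h"
    unfolding g
    by (rule prod_dvd_derivation_mod_alpha[OF derivation_der_apply DC assms(3) finite_lessThan])
  then have "rho \<alpha> \<theta> (quot \<alpha> g) = quot \<alpha> (g * h)"
    by (simp add: rho_quot[OF DC(1)] quot_eq_iff)
  with rho_mem_DerSbar[OF DC(1)] show ?thesis
    by (auto simp: DCpp_def)
qed

end

lemma line_restriction_map_polyI:
  assumes f0: "f 0 = 0" and f_add: "\<And>a b. f (a + b) = f a + f b"
    and f_mult: "\<And>a b. f (a * b) = f a * f b" and "f 1 = 1"
    and "\<And>b. f (\<tau> b) = b" and "\<tau> 0 = 0" and "\<And>a. f a = 0 \<longleftrightarrow> c dvd a"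
    and "\<And>h s t. eval2 (map_poly f h) (s, t) = eval3 h (\<pi> (s, t))"
    and "\<And>k s t. \<pi> (k * s, k * t) = scale3 k (\<pi> (s, t))"
    and "\<And>p. eval3 [:c:] p = 0 \<Longrightarrow> \<exists>q. \<pi> q = p"
    and "\<And>w. \<exists>a b. map_poly f (linear_form w) = linear_form2 a b"
  shows "line_restriction [:c:] (map_poly f) (map_poly \<tau>) \<pi>"
proof unfold_locales
  show "map_poly f (a + b) = map_poly f a + map_poly f b" for a b
    by (rule map_poly_add[of f, OF f0 f_add])
  show "map_poly f (a * b) = map_poly f a * map_poly f b" for a b
    by (rule map_poly_mult[of f, OF f0 f_add f_mult])
  show "map_poly f h = 0 \<longleftrightarrow> [:c:] dvd h" for h
    by (rule map_poly_eq_0_iff_const_dvd[of f, OF f0 assms(7)])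
  show "map_poly f (map_poly \<tau> r) = r" for r
    by (simp add: map_poly_map_poly f0 assms(5,6) o_def)
  show "eval2 (map_poly f h) q = eval3 h (\<pi> q)" for h q
    using assms(8) by (cases q) simp
qed (use assms in simp_all)

lemma line_restriction_eliminate_z:
  assumes "v3 \<noteq> 0"
  shows "line_restriction (linear_form (v1, v2, v3))
    (\<lambda>h. poly h [:[:0, - v1 / v3:], [:- v2 / v3:]:]) (\<lambda>r. [:r:])
    (\<lambda>(s, t). (s, t, - (v1 * s + v2 * t) / v3))"
proof -
  define root :: R where "root = [:[:0, - v1 / v3:], [:- v2 / v3:]:]"
  have factor: "linear_form (v1, v2, v3) = [:- root, 1:] * [:[:[:v3:]:]:]"
    using assms by (simp add: linear_form_expand root_def)
  have "is_unit [:[:[:v3:]:]:]"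
    using assms by (simp add: is_unit_const_poly_iff dvd_field_iff)
  then have kernel: "poly h root = 0 \<longleftrightarrow> linear_form (v1, v2, v3) dvd h" for h
    unfolding factor by (simp only: linear_poly_times_unit_dvd_iff)
  have eval_root: "eval2 root (s, t) = - (v1 * s + v2 * t) / v3" for s t
    using assms by (simp add: root_def eval2_def field_simps)
  show ?thesis
    unfolding root_def[symmetric]
  proof unfold_locales
    show "eval2 (poly h root) q = eval3 h ((\<lambda>(s, t). (s, t, - (v1 * s + v2 * t) / v3)) q)" for h q
      by (cases q) (simp add: eval2_poly eval_root)
    show "\<exists>q. (\<lambda>(s, t). (s, t, - (v1 * s + v2 * t) / v3)) q = p"
      if "eval3 (linear_form (v1, v2, v3)) p = 0" for p
      using that assms by (cases p) (auto simp: eval3_linear_form field_simps add_eq_0_iff)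
    show "\<exists>a b. poly (linear_form w) root = linear_form2 a b" for w
      by (cases w) (auto simp: linear_form_expand root_def linear_form2_def)
  qed (simp_all add: kernel scale3_def algebra_simps)
qed

lemma line_restriction_eliminate_y:
  assumes "v2 \<noteq> 0"
  shows "line_restriction (linear_form (v1, v2, 0))
    (map_poly (\<lambda>a. poly a [:0, - v1 / v2:])) (map_poly (\<lambda>b. [:b:]))
    (\<lambda>(s, t). (s, - v1 / v2 * s, t))"
proof -
  define root :: "complex poly" where "root = [:0, - v1 / v2:]"
  define f where "f a = poly a root" for a :: R
  have f0: "f 0 = 0" and f_add: "f (a + b) = f a + f b" and f_mult: "f (a * b) = f a * f b"
    and f1: "f 1 = 1" for a b
    by (simp_all add: f_def)
  have inverse: "f [:q:] = q" for q
    by (simp add: f_def)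
  have "is_unit [:[:v2:]:]"
    using assms by (simp add: is_unit_const_poly_iff dvd_field_iff)
  then have kernel: "f a = 0 \<longleftrightarrow> [:- root, 1:] * [:[:v2:]:] dvd a" for a
    unfolding f_def by (simp only: linear_poly_times_unit_dvd_iff)
  have \<alpha>: "linear_form (v1, v2, 0) = [:[:- root, 1:] * [:[:v2:]:]:]"
    using assms by (simp add: linear_form_expand root_def)
  have eval: "eval2 (map_poly f h) (s, t) = eval3 h (s, - v1 / v2 * s, t)" for h s t
  proof -
    have "poly (map_poly f h) [:t:] = f (poly h [:[:t:]:])"
      using poly_map_poly_hom[of f h "[:[:t:]:]", OF f0 f_add f_mult] by (simp add: f_def)
    then have "eval2 (map_poly f h) (s, t) = poly (poly (poly h [:[:t:]:]) root) s"
      by (simp add: eval2_def f_def)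
    also have "\<dots> = eval2 (poly h [:[:t:]:]) (s, poly root s)"
      by (rule poly_poly_eq_eval2)
    finally show ?thesis
      by (simp add: eval2_def eval3_def root_def mult.commute)
  qed
  show ?thesis
    unfolding \<alpha> root_def[symmetric] f_def[symmetric, abs_def]
  proof (rule line_restriction_map_polyI)
    show "\<exists>q. (\<lambda>(s, t). (s, - v1 / v2 * s, t)) q = p"
      if "eval3 [:[:- root, 1:] * [:[:v2:]:]:] p = 0" for p
      using that assms unfolding \<alpha>[symmetric]
      by (cases p) (auto simp: eval3_linear_form field_simps add_eq_0_iff)
    show "\<exists>a b. map_poly f (linear_form w) = linear_form2 a b" for w
      by (cases w) (auto simp: linear_form_expand root_def linear_form2_def map_poly_pCons f_def)
  qed (simp_all add: f0 f_add f_mult f1 inverse kernel eval scale3_def algebra_simps)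
qed

lemma line_restriction_eliminate_x:
  assumes "v1 \<noteq> 0"
  shows "line_restriction (linear_form (v1, 0, 0))
    (map_poly (map_poly (\<lambda>b. poly b 0))) (map_poly (map_poly (\<lambda>b. [:b:])))
    (\<lambda>(s, t). (0, s, t))"
proof -
  define g where "g b = poly b (0::complex)" for b :: "complex poly"
  define f where "f = map_poly g"
  have g0: "g 0 = 0" and g_add: "g (a + b) = g a + g b" and g_mult: "g (a * b) = g a * g b" for a b
    by (simp_all add: g_def)
  have f0: "f 0 = 0" and f_add: "f (a + b) = f a + f b" and f_mult: "f (a * b) = f a * f b" for a b
    by (simp_all add: f_def map_poly_add[of g, OF g0 g_add] map_poly_mult[of g, OF g0 g_add g_mult])
  have f1: "f 1 = 1" and inverse: "f (map_poly (\<lambda>b. [:b:]) r) = r" for r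
    by (simp_all add: f_def g_def map_poly_map_poly o_def)
  have "g b = 0 \<longleftrightarrow> [:0, v1:] dvd b" for b
    using assms by (simp add: g_def pCons_0_const_dvd_iff)
  then have kernel: "f a = 0 \<longleftrightarrow> [:[:0, v1:]:] dvd a" for a
    unfolding f_def by (rule map_poly_eq_0_iff_const_dvd[of g, OF g0])
  have \<alpha>: "linear_form (v1, 0, 0) = [:[:[:0, v1:]:]:]"
    by (simp add: linear_form_expand)
  have eval: "eval2 (map_poly f h) (s, t) = eval3 h (0, s, t)" for h s t
  proof -
    have "poly (map_poly f h) [:t:] = f (poly h [:[:t:]:])"
      using poly_map_poly_hom[of f h "[:[:t:]:]", OF f0 f_add f_mult]
      by (simp add: f_def g_def map_poly_pCons)
    then show ?thesis
      by (simp add: eval2_def f_def g_def[abs_def] poly_map_poly_poly_0 eval3_def)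
  qed
  show ?thesis
    unfolding \<alpha> g_def[symmetric, abs_def] f_def[symmetric]
  proof (rule line_restriction_map_polyI)
    show "\<exists>q. (\<lambda>(s, t). (0, s, t)) q = p" if "eval3 [:[:[:0, v1:]:]:] p = 0" for p
      using that assms unfolding \<alpha>[symmetric] by (cases p) (auto simp: eval3_linear_form)
    show "\<exists>a b. map_poly f (linear_form w) = linear_form2 a b" for w
      by (cases w) (auto simp: linear_form_expand linear_form2_def map_poly_pCons f_def g_def)
  qed (simp_all add: f0 f_add f_mult f1 inverse kernel eval scale3_def)
qed

lemma line_restriction_exists:
  assumes "nonzero3 v"
  obtains \<phi> \<sigma> \<pi> where "line_restriction (linear_form v) \<phi> \<sigma> \<pi>"
proof -
  obtain v1 v2 v3 where v: "v = (v1, v2, v3)"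
    by (cases v)
  consider "v3 \<noteq> 0" | "v3 = 0" "v2 \<noteq> 0" | "v3 = 0" "v2 = 0" "v1 \<noteq> 0"
    using assms v by (auto simp: nonzero3_def)
  then show ?thesis
    using that line_restriction_eliminate_z line_restriction_eliminate_y
      line_restriction_eliminate_x v
    by cases blast+
qed

theorem proposition2p10:
  fixes f' :: S and v :: "complex \<times> complex \<times> complex" and g :: S
  assumes "reduced_curve_eq f'"
    and "nonzero3 v"
    and "\<not> linear_form v dvd f'"
    and "reduced_eq_of_intersection (linear_form v) f' g"
  shows "(\<forall>\<theta>\<in>DC f'. der_smult (linear_form v) \<theta> \<in> DC (f' * linear_form v))
    \<and> inj_on (der_smult (linear_form v)) (DC f')
    \<and> (\<forall>\<theta>\<in>DC (f' * linear_form v). rho (linear_form v) \<theta> \<in> DCpp (linear_form v) g)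
    \<and> (\<forall>\<theta>\<in>DC (f' * linear_form v). \<forall>\<theta>'\<in>DC (f' * linear_form v).
          \<forall>u\<in>Sbar (linear_form v). rho (linear_form v) (der_add \<theta> \<theta>') u
             = qplus (rho (linear_form v) \<theta> u) (rho (linear_form v) \<theta>' u))
    \<and> (\<forall>s. \<forall>\<theta>\<in>DC (f' * linear_form v). \<forall>u\<in>Sbar (linear_form v).
          rho (linear_form v) (der_smult s \<theta>) u
             = qtimes (linear_form v) (quot (linear_form v) s) (rho (linear_form v) \<theta> u))
    \<and> (\<forall>\<theta>\<in>DC (f' * linear_form v).
          (\<forall>u\<in>Sbar (linear_form v). rho (linear_form v) \<theta> u = quot (linear_form v) 0)
          \<longleftrightarrow> (\<exists>\<theta>'\<in>DC f'. \<theta> = der_smult (linear_form v) \<theta>'))"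
proof -
  obtain \<phi> \<sigma> \<pi> where "line_restriction (linear_form v) \<phi> \<sigma> \<pi>"
    using line_restriction_exists[OF assms(2)] .
  then interpret line_restriction "linear_form v" \<phi> \<sigma> \<pi> .
  have "linear_form v \<noteq> 0"
    using assms(2) by (simp add: linear_form_eq_0_iff)
  note \<alpha>_prime = prime_elem_alpha[OF this]
  obtain d where "homogeneous3 d f'"
    using assms(1) by (auto simp: reduced_curve_eq_def)
  show ?thesis
    using der_smult_mem_DC_mult inj_der_smult[OF \<open>linear_form v \<noteq> 0\<close>]
      rho_mem_DCpp[OF \<open>linear_form v \<noteq> 0\<close> \<open>homogeneous3 d f'\<close> assms(3,4)]
      rho_der_add rho_der_smult rho_vanishes_iff[OF \<alpha>_prime assms(3)]
    by (auto intro: inj_on_subset)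
qed

end
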